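(* Let $\alpha\in(0,1)\setminus\mathbb{Q}$. There is $\beta_0>0$ such that for every irrational $\beta\in(0,\beta_0)$ the following holds for the maps $T_1,T_2$ of the circle $\mathbb{S}=\mathbb{R}/\mathbb{Z}$ defined below: for every arc $K\subset\mathbb{S}$ of positive length there is a finite word $j_1,\dots,j_k\in\{1,2\}$ such that $(T_{j_1}\circ\dots\circ T_{j_k})(\mathbb{S})\subset K$.
   Context: $\mathbb{S}=\mathbb{R}/\mathbb{Z}$, with points represented by $y\in[0,1)$. Let $\delta=1-\alpha$. $T_1(y)=y+\alpha \bmod 1$. $T_2$ is the double rotation $T_2(y)=y+\alpha+\beta\bmod 1$ if $y\le\delta$, and $T_2(y)=y+\alpha\bmod1$ if $y>\delta$. *)

theory Defs
  imports Complex_Main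
begin

text \<open>The circle R/Z is represented by points y in [0,1); reduction mod 1 is frac.\<close>

definition circle :: "real set" where
  "circle = {0..<1}"

definition T1 :: "real \<Rightarrow> real \<Rightarrow> real" where
  "T1 \<alpha> y = frac (y + \<alpha>)"

definition T2 :: "real \<Rightarrow> real \<Rightarrow> real \<Rightarrow> real" where
  "T2 \<alpha> \<beta> y = (if y \<le> 1 - \<alpha> then frac (y + \<alpha> + \<beta>) else frac (y + \<alpha>))"

definition Tmap :: "real \<Rightarrow> real \<Rightarrow> nat \<Rightarrow> real \<Rightarrow> real" where
  "Tmap \<alpha> \<beta> j = (if j = 1 then T1 \<alpha> else T2 \<alpha> \<beta>)"

definition word_comp :: "real \<Rightarrow> real \<Rightarrow> nat list \<Rightarrow> real \<Rightarrow> real" where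
  "word_comp \<alpha> \<beta> js = foldr (\<lambda>j f. Tmap \<alpha> \<beta> j \<circ> f) js id"

definition open_arc :: "real \<Rightarrow> real \<Rightarrow> real set" where
  "open_arc a L = {frac (a + t) | t. 0 < t \<and> t < L}"

end

theory Submission
  imports Defs "HOL-Analysis.Kronecker_Approximation_Theorem"
begin

text \<open>
  Call l attainable if some word maps the whole circle into a closed arc of length l.
  T2 differs from the rotation T1 only by the extra \<beta> on [0, 1 - \<alpha>]; since the T1-orbits
  are dense, a word T2 T1^n moves a chosen piece of the current image arc by \<beta> while leaving
  another piece in place, and iterating this moves a piece by any multiple of \<beta>.
  Let m > 0 be the infimum of the attainable lengths. If m > 2\<beta>, pushing the first
  \<beta>-piece of a nearly optimal arc onto its neighbour shortens it by \<beta>. If m \<le> 2\<beta>, let q be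
  the first return of k\<beta> mod 1 to [0, m] (or to [1 - m, 1)); moving an end piece of a nearly
  optimal arc by q\<beta> folds it over the rest of the arc, and by irrationality of \<beta> one of the
  two returns lies strictly inside, which produces an arc shorter than m. Hence arbitrarily
  short arcs are attainable, and a final power of T1 rotates such an arc into any given arc.
\<close>

lemma frac_eqI: "x - r \<in> \<int> \<Longrightarrow> 0 \<le> r \<Longrightarrow> r < 1 \<Longrightarrow> frac x = r"
  by (simp add: frac_unique_iff)

lemma frac_eq_if_diff_Ints: "x - y \<in> \<int> \<Longrightarrow> frac x = frac y"
  using frac_add_int_right[of "x - y" y] by (simp add: add.commute)

lemma diff_frac_Ints: "x - frac x \<in> \<int>"
  by (simp add: frac_def)

lemma frac_minus_add:
  assumes "0 < a + frac x" "a + frac x \<le> 1"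
  shows "frac (- (a + x)) = 1 - a - frac x"
proof (rule frac_eqI)
  have "- (a + x) - (1 - a - frac x) = of_int (- \<lfloor>x\<rfloor> - 1)"
    by (simp add: frac_def)
  then show "- (a + x) - (1 - a - frac x) \<in> \<int>" by (metis Ints_of_int)
qed (use assms in auto)

lemma of_nat_mult_irrational_notin_Ints:
  fixes \<beta> :: real
  assumes "\<beta> \<notin> \<rat>" "j \<noteq> 0"
  shows "real j * \<beta> \<notin> \<int>"
proof
  assume "real j * \<beta> \<in> \<int>"
  then obtain k where "real j * \<beta> = of_int k" by (auto elim: Ints_cases)
  then have "\<beta> = of_int k / real j" using assms(2) by (simp add: field_simps)
  then show False using assms(1) by (simp add: Rats_divide)
qed

lemma frac_mult_irrational_add_neq_1:
  fixes \<beta> :: real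
  assumes "\<beta> \<notin> \<rat>" "i + j \<noteq> 0"
  shows "frac (real i * \<beta>) + frac (real j * \<beta>) \<noteq> 1"
proof
  assume "frac (real i * \<beta>) + frac (real j * \<beta>) = 1"
  then have "real (i + j) * \<beta> = of_int (\<lfloor>real i * \<beta>\<rfloor> + \<lfloor>real j * \<beta>\<rfloor> + 1)"
    by (simp add: frac_def algebra_simps)
  then show False
    using of_nat_mult_irrational_notin_Ints[OF assms] by (metis Ints_of_int)
qed

lemma frac_irrational_rotation_dense:
  fixes \<alpha> :: real
  assumes "\<alpha> \<notin> \<rat>" "0 \<le> c" "c < d" "d \<le> 1"
  obtains n :: nat where "c < frac (x + real n * \<alpha>)" "frac (x + real n * \<alpha>) < d"
proof -
  define mid where "mid = (c + d) / 2"
  obtain k where k: "\<bar>frac (real k * \<alpha>) - frac (mid - x)\<bar> < (d - c) / 2"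
    using Kronecker_approx_1_explicit[OF assms(1), of "frac (mid - x)" "(d - c) / 2"]
      frac_lt_1[of "mid - x"] assms(3) by force
  define r where "r = mid + frac (real k * \<alpha>) - frac (mid - x)"
  have r: "c < r" "r < d"
    using k assms unfolding abs_less_iff r_def mid_def by (auto simp: field_simps)
  have "x + real k * \<alpha> - r = of_int (\<lfloor>real k * \<alpha>\<rfloor> - \<lfloor>mid - x\<rfloor>)"
    by (simp add: r_def frac_def)
  then have "frac (x + real k * \<alpha>) = r"
    using r assms by (intro frac_eqI) (auto simp del: of_int_diff)
  with r that show thesis by auto
qed

lemma finite_set_margin:
  fixes F :: "real set"
  assumes "finite F" "\<forall>x\<in>F. lo < x \<and> x < hi"
  obtains \<kappa> where "\<kappa> > 0" "\<forall>x\<in>F. lo + \<kappa> < x \<and> x < hi - \<kappa>"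
proof -
  have "\<forall>x\<in>F. \<forall>\<^sub>F \<kappa> in at_right 0. lo + \<kappa> < x \<and> x < hi - \<kappa>"
  proof
    fix x assume "x \<in> F"
    then have "0 < min (x - lo) (hi - x)" using assms(2) by auto
    then show "\<forall>\<^sub>F \<kappa> in at_right 0. lo + \<kappa> < x \<and> x < hi - \<kappa>"
      by (rule eventually_mono[OF eventually_at_right_real]) auto
  qed
  then have "\<forall>\<^sub>F \<kappa> in at_right (0::real). 0 < \<kappa> \<and> (\<forall>x\<in>F. lo + \<kappa> < x \<and> x < hi - \<kappa>)"
    using assms(1) by (intro eventually_conj eventually_at_right_less) (simp add: eventually_ball_finite)
  then show thesis using that eventually_happens' trivial_limit_at_right_real by blast
qed

lemma word_comp_Nil [simp]: "word_comp \<alpha> \<beta> [] = id"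
  by (simp add: word_comp_def)

lemma word_comp_Cons: "word_comp \<alpha> \<beta> (j # js) = Tmap \<alpha> \<beta> j \<circ> word_comp \<alpha> \<beta> js"
  by (simp add: word_comp_def)

lemma word_comp_append:
  "word_comp \<alpha> \<beta> (xs @ ys) = word_comp \<alpha> \<beta> xs \<circ> word_comp \<alpha> \<beta> ys"
  by (induction xs) (simp_all add: word_comp_Cons)

lemma word_comp_T1_power:
  "word_comp \<alpha> \<beta> (replicate n 1) (frac z) = frac (z + real n * \<alpha>)"
  by (induction n) (simp_all add: word_comp_Cons Tmap_def T1_def algebra_simps)

lemma word_comp_T2_T1_power:
  "word_comp \<alpha> \<beta> (2 # replicate n 1) (frac z) =
    (if frac (z + real n * \<alpha>) \<le> 1 - \<alpha> then frac (z + real n * \<alpha> + \<alpha> + \<beta>)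
     else frac (z + real n * \<alpha> + \<alpha>))"
  unfolding word_comp_Cons comp_apply word_comp_T1_power by (simp add: Tmap_def T2_def add.assoc)

lemma exists_word_shifting_arc:
  fixes \<alpha> \<beta> :: real
  assumes "\<alpha> \<notin> \<rat>" "0 < \<alpha>" "\<alpha> < 1"
    and "0 \<le> wu" "0 \<le> wv" "wu < 1 - \<alpha>" "wv < \<alpha>"
    and "wu < frac (v - u)" "frac (v - u) + wv < 1"
  obtains w Q where "set w \<subseteq> {1, 2}"
    "\<And>\<tau>. \<tau> \<in> {u..u + wu} \<Longrightarrow> word_comp \<alpha> \<beta> w (frac (P + \<tau>)) = frac (Q + \<tau> + \<beta>)"
    "\<And>\<tau>. \<tau> \<in> {v..v + wv} \<Longrightarrow> word_comp \<alpha> \<beta> w (frac (P + \<tau>)) = frac (Q + \<tau>)"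
    "\<And>\<tau>. word_comp \<alpha> \<beta> w (frac (P + \<tau>)) \<in> {frac (Q + \<tau> + \<beta>), frac (Q + \<tau>)}"
proof -
  define d where "d = frac (v - u)"
  define lo where "lo = max 0 (1 - \<alpha> - d)"
  define hi where "hi = min (1 - \<alpha> - wu) (1 - d - wv)"
  have "0 \<le> lo" "lo < hi" "hi \<le> 1"
    using assms by (auto simp: lo_def hi_def d_def)
  \<comment> \<open>rotate by a power of T1 so that the first arc lies in [0, 1 - \<alpha>], where T2 adds \<beta>,
    and the second one in (1 - \<alpha>, 1), where it does not\<close>
  then obtain n where n: "lo < frac (P + u + real n * \<alpha>)" "frac (P + u + real n * \<alpha>) < hi"
    using frac_irrational_rotation_dense[OF assms(1)] by metis
  define h where "h = frac (P + u + real n * \<alpha>)"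
  have "0 \<le> d" by (simp add: d_def)
  have first_arc: "frac (P + \<tau> + real n * \<alpha>) = h + (\<tau> - u)" if "\<tau> \<in> {u..u + wu}" for \<tau>
  proof (rule frac_eqI)
    show "P + \<tau> + real n * \<alpha> - (h + (\<tau> - u)) \<in> \<int>"
      using diff_frac_Ints[of "P + u + real n * \<alpha>"] by (simp add: h_def algebra_simps)
  qed (use that n assms in \<open>auto simp: h_def hi_def lo_def\<close>)
  have second_arc: "frac (P + \<tau> + real n * \<alpha>) = h + d + (\<tau> - v)" if "\<tau> \<in> {v..v + wv}" for \<tau>
  proof (rule frac_eqI)
    have "P + \<tau> + real n * \<alpha> - (h + d + (\<tau> - v)) =
        (P + u + real n * \<alpha> - h) + (v - u - d)"
      by simp
    then show "P + \<tau> + real n * \<alpha> - (h + d + (\<tau> - v)) \<in> \<int>"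
      unfolding h_def d_def by (metis Ints_add diff_frac_Ints)
  qed (use that n \<open>0 \<le> d\<close> in \<open>auto simp: h_def hi_def\<close>)
  show thesis
  proof (rule that[of "2 # replicate n 1" "P + real n * \<alpha> + \<alpha>"])
    fix \<tau>
    have w: "word_comp \<alpha> \<beta> (2 # replicate n 1) (frac (P + \<tau>)) =
        (if frac (P + \<tau> + real n * \<alpha>) \<le> 1 - \<alpha>
         then frac (P + real n * \<alpha> + \<alpha> + \<tau> + \<beta>) else frac (P + real n * \<alpha> + \<alpha> + \<tau>))"
      unfolding word_comp_T2_T1_power by (simp add: algebra_simps)
    then show "word_comp \<alpha> \<beta> (2 # replicate n 1) (frac (P + \<tau>)) \<in>
        {frac (P + real n * \<alpha> + \<alpha> + \<tau> + \<beta>), frac (P + real n * \<alpha> + \<alpha> + \<tau>)}"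
      by simp
    show "word_comp \<alpha> \<beta> (2 # replicate n 1) (frac (P + \<tau>)) = frac (P + real n * \<alpha> + \<alpha> + \<tau> + \<beta>)"
      if "\<tau> \<in> {u..u + wu}"
      using w first_arc[OF that] n that by (simp add: h_def hi_def)
    show "word_comp \<alpha> \<beta> (2 # replicate n 1) (frac (P + \<tau>)) = frac (P + real n * \<alpha> + \<alpha> + \<tau>)"
      if "\<tau> \<in> {v..v + wv}"
      using w second_arc[OF that] n that by (simp add: h_def lo_def)
  qed auto
qed

lemma exists_word_shifting_arc_iter:
  fixes \<alpha> \<beta> :: real
  assumes "\<alpha> \<notin> \<rat>" "0 < \<alpha>" "\<alpha> < 1"
    and "0 \<le> wu" "0 \<le> wv" "wu < 1 - \<alpha>" "wv < \<alpha>"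
    and "\<And>j. j < k \<Longrightarrow>
      wu < frac (v - (u + real j * \<beta>)) \<and> frac (v - (u + real j * \<beta>)) + wv < 1"
  obtains w Q where "set w \<subseteq> {1, 2}"
    "\<And>\<tau>. \<tau> \<in> {u..u + wu} \<Longrightarrow> word_comp \<alpha> \<beta> w (frac (P + \<tau>)) = frac (Q + \<tau> + real k * \<beta>)"
    "\<And>\<tau>. \<tau> \<in> {v..v + wv} \<Longrightarrow> word_comp \<alpha> \<beta> w (frac (P + \<tau>)) = frac (Q + \<tau>)"
proof -
  have "\<exists>w Q. set w \<subseteq> {1, 2} \<and>
      (\<forall>\<tau>\<in>{u..u + wu}. word_comp \<alpha> \<beta> w (frac (P + \<tau>)) = frac (Q + \<tau> + real k * \<beta>)) \<and>
      (\<forall>\<tau>\<in>{v..v + wv}. word_comp \<alpha> \<beta> w (frac (P + \<tau>)) = frac (Q + \<tau>))"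
    using assms(8)
  proof (induction k)
    case 0
    show ?case by (intro exI[of _ "[]"] exI[of _ P]) simp
  next
    case (Suc k)
    have "\<And>j. j < k \<Longrightarrow>
        wu < frac (v - (u + real j * \<beta>)) \<and> frac (v - (u + real j * \<beta>)) + wv < 1"
      using Suc.prems by simp
    then obtain w Q where w: "set w \<subseteq> {1, 2}"
      and U: "\<forall>\<tau>\<in>{u..u + wu}. word_comp \<alpha> \<beta> w (frac (P + \<tau>)) = frac (Q + \<tau> + real k * \<beta>)"
      and V: "\<forall>\<tau>\<in>{v..v + wv}. word_comp \<alpha> \<beta> w (frac (P + \<tau>)) = frac (Q + \<tau>)"
      using Suc.IH by blast
    have shift_ok: "wu < frac (v - (u + real k * \<beta>))" "frac (v - (u + real k * \<beta>)) + wv < 1"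
      using Suc.prems by auto
    obtain w' Q' where w': "set w' \<subseteq> {1, 2}"
      and U': "\<And>\<tau>. \<tau> \<in> {u + real k * \<beta>..u + real k * \<beta> + wu} \<Longrightarrow>
        word_comp \<alpha> \<beta> w' (frac (Q + \<tau>)) = frac (Q' + \<tau> + \<beta>)"
      and V': "\<And>\<tau>. \<tau> \<in> {v..v + wv} \<Longrightarrow> word_comp \<alpha> \<beta> w' (frac (Q + \<tau>)) = frac (Q' + \<tau>)"
      by (rule exists_word_shifting_arc[OF assms(1-7) shift_ok, where P = Q and \<beta> = \<beta>]) blast
    have "word_comp \<alpha> \<beta> (w' @ w) (frac (P + \<tau>)) = frac (Q' + \<tau> + real (Suc k) * \<beta>)"
      if "\<tau> \<in> {u..u + wu}" for \<tau>
    proof -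
      have "word_comp \<alpha> \<beta> w (frac (P + \<tau>)) = frac (Q + (\<tau> + real k * \<beta>))"
        using U that by (simp add: add.assoc)
      then show ?thesis
        using U'[of "\<tau> + real k * \<beta>"] that by (simp add: word_comp_append algebra_simps)
    qed
    moreover have "word_comp \<alpha> \<beta> (w' @ w) (frac (P + \<tau>)) = frac (Q' + \<tau>)"
      if "\<tau> \<in> {v..v + wv}" for \<tau>
      using V that V' by (simp add: word_comp_append)
    ultimately show ?case using w w' by (intro exI[of _ "w' @ w"] exI[of _ Q']) auto
  qed
  then show thesis using that by blast
qed

definition contracts_to_arc :: "real \<Rightarrow> real \<Rightarrow> real \<Rightarrow> bool" where
  "contracts_to_arc \<alpha> \<beta> l \<longleftrightarrow> (\<exists>w p. set w \<subseteq> {1, 2} \<and>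
     word_comp \<alpha> \<beta> w ` circle \<subseteq> (\<lambda>t. frac (p + t)) ` {0..l})"

lemma contracts_to_arcI:
  assumes "set w \<subseteq> {1, 2}" "word_comp \<alpha> \<beta> w ` circle \<subseteq> (\<lambda>\<tau>. frac (Q + \<tau>)) ` S"
    and "S \<subseteq> {lo..hi}"
  shows "contracts_to_arc \<alpha> \<beta> (hi - lo)"
proof -
  have "(\<lambda>\<tau>. frac (Q + \<tau>)) ` S \<subseteq> (\<lambda>t. frac (Q + lo + t)) ` {0..hi - lo}"
  proof
    fix x assume "x \<in> (\<lambda>\<tau>. frac (Q + \<tau>)) ` S"
    then obtain \<tau> where "\<tau> \<in> {lo..hi}" "x = frac (Q + \<tau>)" using assms(3) by auto
    then show "x \<in> (\<lambda>t. frac (Q + lo + t)) ` {0..hi - lo}"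
      by (intro image_eqI[of _ _ "\<tau> - lo"]) auto
  qed
  then show ?thesis
    unfolding contracts_to_arc_def using assms(1) order_trans[OF assms(2)] by blast
qed

lemma contracts_to_arc_one_minus_beta:
  assumes "0 < \<beta>" "\<beta> < \<alpha>" "\<beta> < 1 - \<alpha>"
  shows "contracts_to_arc \<alpha> \<beta> (1 - \<beta>)"
proof -
  have "word_comp \<alpha> \<beta> [2] ` circle \<subseteq> (\<lambda>\<tau>. frac (\<alpha> + \<beta> + \<tau>)) ` {0..1 - \<beta>}"
  proof
    fix x assume "x \<in> word_comp \<alpha> \<beta> [2] ` circle"
    then obtain y where y: "0 \<le> y" "y < 1" "x = T2 \<alpha> \<beta> y"
      by (auto simp: circle_def word_comp_Cons Tmap_def)
    \<comment> \<open>T2 skips the gap between \<alpha> and \<alpha> + \<beta>, so the image is an arc of length 1 - \<beta>\<close>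
    show "x \<in> (\<lambda>\<tau>. frac (\<alpha> + \<beta> + \<tau>)) ` {0..1 - \<beta>}"
    proof (cases "y \<le> 1 - \<alpha>")
      case True
      then have "x = frac (\<alpha> + \<beta> + y)" using y by (simp add: T2_def algebra_simps)
      then show ?thesis using y True assms by (intro image_eqI[of _ _ y]) auto
    next
      case False
      then have "x = frac (\<alpha> + \<beta> + (y - \<beta>))" using y by (simp add: T2_def algebra_simps)
      then show ?thesis using y False assms by (intro image_eqI[of _ _ "y - \<beta>"]) auto
    qed
  qed
  then show ?thesis
    using contracts_to_arcI[of "[2]" \<alpha> \<beta> "\<alpha> + \<beta>" "{0..1 - \<beta>}" 0 "1 - \<beta>"] by simp
qed

lemma contracts_to_arc_split:
  fixes \<alpha> \<beta> :: real
  assumes "\<alpha> \<notin> \<rat>" "0 < \<alpha>" "\<alpha> < 1" and "contracts_to_arc \<alpha> \<beta> l"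
    and "0 \<le> wu" "0 \<le> wv" "wu < 1 - \<alpha>" "wv < \<alpha>"
    and "wu < frac (v - u)" "frac (v - u) + wv < 1"
    and to_A: "\<And>t. t \<in> {0..l} \<Longrightarrow> t \<in> {u..u + wu} \<Longrightarrow> t + \<beta> \<in> A"
    and to_B: "\<And>t. t \<in> {0..l} \<Longrightarrow> t \<in> {v..v + wv} \<Longrightarrow> t \<in> B"
    and to_both: "\<And>t. t \<in> {0..l} \<Longrightarrow> t \<notin> {u..u + wu} \<Longrightarrow> t \<notin> {v..v + wv} \<Longrightarrow>
      t + \<beta> \<in> A \<and> t \<in> B"
  obtains w Q where "set w \<subseteq> {1, 2}"
    "word_comp \<alpha> \<beta> w ` circle \<subseteq> (\<lambda>\<tau>. frac (Q + \<tau>)) ` (A \<union> B)"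
proof -
  obtain w0 p where w0: "set w0 \<subseteq> {1, 2}"
    and arc: "word_comp \<alpha> \<beta> w0 ` circle \<subseteq> (\<lambda>t. frac (p + t)) ` {0..l}"
    using assms(4) unfolding contracts_to_arc_def by blast
  obtain w1 Q where w1: "set w1 \<subseteq> {1, 2}"
    and U: "\<And>t. t \<in> {u..u + wu} \<Longrightarrow> word_comp \<alpha> \<beta> w1 (frac (p + t)) = frac (Q + t + \<beta>)"
    and V: "\<And>t. t \<in> {v..v + wv} \<Longrightarrow> word_comp \<alpha> \<beta> w1 (frac (p + t)) = frac (Q + t)"
    and any: "\<And>t. word_comp \<alpha> \<beta> w1 (frac (p + t)) \<in> {frac (Q + t + \<beta>), frac (Q + t)}"
    by (rule exists_word_shifting_arc[OF assms(1-3,5-10), where P = p and \<beta> = \<beta>]) blast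
  have "word_comp \<alpha> \<beta> (w1 @ w0) ` circle \<subseteq> (\<lambda>\<tau>. frac (Q + \<tau>)) ` (A \<union> B)"
  proof
    fix x assume "x \<in> word_comp \<alpha> \<beta> (w1 @ w0) ` circle"
    then obtain t where t: "t \<in> {0..l}" and x: "x = word_comp \<alpha> \<beta> w1 (frac (p + t))"
      using arc by (force simp: word_comp_append)
    have shifted: "frac (Q + t + \<beta>) \<in> (\<lambda>\<tau>. frac (Q + \<tau>)) ` (A \<union> B)" if "t + \<beta> \<in> A"
      using that by (intro image_eqI[of _ _ "t + \<beta>"]) (auto simp: add.assoc)
    have fixed: "frac (Q + t) \<in> (\<lambda>\<tau>. frac (Q + \<tau>)) ` (A \<union> B)" if "t \<in> B"
      using that by auto
    consider "t \<in> {u..u + wu}" | "t \<in> {v..v + wv}" | "t \<notin> {u..u + wu}" "t \<notin> {v..v + wv}"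
      by blast
    then show "x \<in> (\<lambda>\<tau>. frac (Q + \<tau>)) ` (A \<union> B)"
    proof cases
      case 1
      then show ?thesis using x U shifted to_A t by simp
    next
      case 2
      then show ?thesis using x V fixed to_B t by simp
    next
      case 3
      then show ?thesis using x any[of t] shifted fixed to_both[OF t] by auto
    qed
  qed
  with w0 w1 show thesis by (intro that[of "w1 @ w0" Q]) auto
qed

lemma word_image_shift_arc:
  fixes \<alpha> \<beta> :: real
  assumes "\<alpha> \<notin> \<rat>" "0 < \<alpha>" "\<alpha> < 1"
    and "set w \<subseteq> {1, 2}"
    and "word_comp \<alpha> \<beta> w ` circle \<subseteq> (\<lambda>\<tau>. frac (Q + \<tau>)) ` ({u..u + wu} \<union> {v..v + wv})"
    and "0 \<le> wu" "0 \<le> wv" "wu < 1 - \<alpha>" "wv < \<alpha>"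
    and "\<And>j. j < k \<Longrightarrow>
      wu < frac (v - (u + real j * \<beta>)) \<and> frac (v - (u + real j * \<beta>)) + wv < 1"
  obtains w' Q' where "set w' \<subseteq> {1, 2}"
    "word_comp \<alpha> \<beta> w' ` circle \<subseteq>
       (\<lambda>\<tau>. frac (Q' + \<tau>)) ` ((\<lambda>s. s + real k * \<beta>) ` {u..u + wu} \<union> {v..v + wv})"
proof -
  obtain w1 Q' where w1: "set w1 \<subseteq> {1, 2}"
    and U: "\<And>\<tau>. \<tau> \<in> {u..u + wu} \<Longrightarrow> word_comp \<alpha> \<beta> w1 (frac (Q + \<tau>)) = frac (Q' + \<tau> + real k * \<beta>)"
    and V: "\<And>\<tau>. \<tau> \<in> {v..v + wv} \<Longrightarrow> word_comp \<alpha> \<beta> w1 (frac (Q + \<tau>)) = frac (Q' + \<tau>)"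
    using exists_word_shifting_arc_iter[OF assms(1-3,6-10), where P = Q] by metis
  have "word_comp \<alpha> \<beta> (w1 @ w) ` circle \<subseteq>
      (\<lambda>\<tau>. frac (Q' + \<tau>)) ` ((\<lambda>s. s + real k * \<beta>) ` {u..u + wu} \<union> {v..v + wv})"
  proof
    fix x assume "x \<in> word_comp \<alpha> \<beta> (w1 @ w) ` circle"
    then obtain \<tau> where \<tau>: "\<tau> \<in> {u..u + wu} \<union> {v..v + wv}"
      and x: "x = word_comp \<alpha> \<beta> w1 (frac (Q + \<tau>))"
      using assms(5) by (force simp: word_comp_append)
    show "x \<in> (\<lambda>\<tau>. frac (Q' + \<tau>)) ` ((\<lambda>s. s + real k * \<beta>) ` {u..u + wu} \<union> {v..v + wv})"
    proof (cases "\<tau> \<in> {u..u + wu}")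
      case True
      then show ?thesis using x U by (intro image_eqI[of _ _ "\<tau> + real k * \<beta>"]) (auto simp: add.assoc)
    next
      case False
      then show ?thesis using x V \<tau> by auto
    qed
  qed
  with w1 assms(4) show thesis by (intro that[of "w1 @ w" Q']) auto
qed

lemma contracts_to_arc_shorten:
  fixes \<alpha> \<beta> :: real
  assumes "\<alpha> \<notin> \<rat>" "0 < \<alpha>" "\<alpha> < 1" "0 < \<beta>" "\<beta> < \<alpha>" "\<beta> < 1 - \<alpha>"
    and "contracts_to_arc \<alpha> \<beta> l" "2 * \<beta> < l" "l < 1"
  shows "contracts_to_arc \<alpha> \<beta> (l - \<beta>)"
proof -
  have gap: "frac (l - \<beta> - 0) = l - \<beta>" using assms by (simp add: frac_eq)
  \<comment> \<open>push the initial piece [0, \<beta>] onto [\<beta>, 2\<beta>] and keep the final piece [l - \<beta>, l] fixed\<close>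
  obtain w Q where "set w \<subseteq> {1, 2}"
    "word_comp \<alpha> \<beta> w ` circle \<subseteq> (\<lambda>\<tau>. frac (Q + \<tau>)) ` ({\<beta>..l} \<union> {\<beta>..l})"
    by (rule contracts_to_arc_split[OF assms(1-3,7), where wu = \<beta> and wv = \<beta>
      and v = "l - \<beta>" and u = 0 and A = "{\<beta>..l}" and B = "{\<beta>..l}"]) (use assms gap in auto)
  then show ?thesis by (intro contracts_to_arcI) auto
qed

lemma frac_image_translate_Int:
  "(\<lambda>\<tau>. frac (Q + \<tau>)) ` ((\<lambda>s. s + of_int K) ` A \<union> B) = (\<lambda>\<tau>. frac (Q + \<tau>)) ` (A \<union> B)"
  by (simp add: image_Un image_image add.assoc[symmetric])

lemma contracts_to_arc_fold_from_above:
  fixes \<alpha> \<beta> :: real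
  assumes "\<alpha> \<notin> \<rat>" "0 < \<alpha>" "\<alpha> < 1" "0 < \<beta>"
    and "contracts_to_arc \<alpha> \<beta> l" "l < \<alpha>" "l < 1 - \<alpha>"
    and "1 \<le> q" "frac (real q * \<beta>) = \<gamma>"
    and "0 < \<epsilon>" "\<epsilon> \<le> \<gamma>" "\<gamma> + \<epsilon> \<le> l"
    and return: "\<And>j. 1 \<le> j \<Longrightarrow> j < q \<Longrightarrow> l < frac (real j * \<beta>) \<and> frac (real j * \<beta>) < 1 - 2 * \<epsilon>"
  shows "contracts_to_arc \<alpha> \<beta> (l + \<epsilon> - min \<gamma> (l - \<gamma> - \<epsilon>))"
proof -
  define a where "a = l - \<gamma> - \<epsilon>"
  define b where "b = l - \<gamma> + \<epsilon>"
  have ab: "0 \<le> a" "a < b" "b \<le> l" "frac (b - 0) = b"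
    using assms by (auto simp: a_def b_def frac_eq)
  \<comment> \<open>[0, a] is moved by \<beta> and then by q - 1 further steps \<beta>, i.e. in total by q \<beta> = \<gamma> mod 1,
    while [b, l] stays; the two images overlap\<close>
  obtain w Q where w: "set w \<subseteq> {1, 2}"
    and split: "word_comp \<alpha> \<beta> w ` circle \<subseteq> (\<lambda>\<tau>. frac (Q + \<tau>)) ` ({\<beta>..\<beta> + b} \<union> {a..a + (\<gamma> + \<epsilon>)})"
    by (rule contracts_to_arc_split[OF assms(1-3,5), where wu = a and wv = "\<gamma> - \<epsilon>" and u = 0
      and v = b and A = "{\<beta>..\<beta> + b}" and B = "{a..a + (\<gamma> + \<epsilon>)}"])
      (use assms ab in \<open>auto simp: a_def b_def\<close>)
  have walk: "b < frac (a - (\<beta> + real j * \<beta>)) \<and> frac (a - (\<beta> + real j * \<beta>)) + (\<gamma> + \<epsilon>) < 1"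
    if "j < q - 1" for j
  proof -
    have ret: "l < frac (real (Suc j) * \<beta>)" "frac (real (Suc j) * \<beta>) < 1 - 2 * \<epsilon>"
      using return[of "Suc j"] that by auto
    then have "frac (a - real (Suc j) * \<beta>) = a + 1 - frac (real (Suc j) * \<beta>)"
      using ab assms by (subst frac_diff_neg) (auto simp: a_def frac_eq)
    then show ?thesis using ret by (simp add: algebra_simps a_def b_def)
  qed
  obtain w' Q' where w': "set w' \<subseteq> {1, 2}"
    and walked: "word_comp \<alpha> \<beta> w' ` circle \<subseteq> (\<lambda>\<tau>. frac (Q' + \<tau>)) `
      ((\<lambda>s. s + real (q - 1) * \<beta>) ` {\<beta>..\<beta> + b} \<union> {a..a + (\<gamma> + \<epsilon>)})"
    by (rule word_image_shift_arc[OF assms(1-3) w split, where k = "q - 1"])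
      (use assms ab walk in auto)
  have "\<beta> + real (q - 1) * \<beta> = \<gamma> + of_int \<lfloor>real q * \<beta>\<rfloor>"
    using assms(8,9) by (simp add: of_nat_diff algebra_simps frac_def)
  then have "(\<lambda>s. s + real (q - 1) * \<beta>) ` {\<beta>..\<beta> + b} = (\<lambda>s. s + of_int \<lfloor>real q * \<beta>\<rfloor>) ` {\<gamma>..\<gamma> + b}"
    by (simp add: algebra_simps)
  with walked have "word_comp \<alpha> \<beta> w' ` circle \<subseteq> (\<lambda>\<tau>. frac (Q' + \<tau>)) ` ({\<gamma>..\<gamma> + b} \<union> {a..a + (\<gamma> + \<epsilon>)})"
    by (simp only: frac_image_translate_Int)
  moreover have "{\<gamma>..\<gamma> + b} \<union> {a..a + (\<gamma> + \<epsilon>)} \<subseteq> {min \<gamma> a..l + \<epsilon>}"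
    using assms(10) by (auto simp: a_def b_def)
  ultimately show ?thesis using w' contracts_to_arcI by (simp add: a_def)
qed

lemma contracts_to_arc_fold_from_below:
  fixes \<alpha> \<beta> :: real
  assumes "\<alpha> \<notin> \<rat>" "0 < \<alpha>" "\<alpha> < 1" "0 < \<beta>"
    and "contracts_to_arc \<alpha> \<beta> l" "l < \<alpha>" "l < 1 - \<alpha>"
    and "1 \<le> q" "frac (real q * \<beta>) = 1 - \<gamma>"
    and "0 < \<epsilon>" "\<epsilon> \<le> \<gamma>" "\<gamma> + \<epsilon> \<le> l"
    and return: "\<And>j. 1 \<le> j \<Longrightarrow> j < q \<Longrightarrow> 2 * \<epsilon> < frac (real j * \<beta>) \<and> frac (real j * \<beta>) < 1 - l"
  shows "contracts_to_arc \<alpha> \<beta> (max (\<gamma> + \<epsilon>) (l - \<gamma>) + \<epsilon>)"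
proof -
  define a where "a = \<gamma> - \<epsilon>"
  define b where "b = \<gamma> + \<epsilon>"
  have ab: "0 \<le> a" "a < b" "b \<le> l"
    using assms by (auto simp: a_def b_def)
  have gap: "frac (0 - b) = 1 - b"
    using ab assms by (intro frac_eqI) auto
  \<comment> \<open>[b, l] is moved by q \<beta> = -\<gamma> mod 1 and lands overlapping the fixed piece [0, b]\<close>
  obtain w Q where w: "set w \<subseteq> {1, 2}"
    and split: "word_comp \<alpha> \<beta> w ` circle \<subseteq>
      (\<lambda>\<tau>. frac (Q + \<tau>)) ` ({a + \<beta>..a + \<beta> + (l - a)} \<union> {0..0 + b})"
    by (rule contracts_to_arc_split[OF assms(1-3,5), where wu = "l - b" and wv = a and u = b
      and v = 0 and A = "{a + \<beta>..a + \<beta> + (l - a)}" and B = "{0..0 + b}"])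
      (use assms ab gap in \<open>auto simp: a_def b_def\<close>)
  have walk: "l - a < frac (0 - (a + \<beta> + real j * \<beta>)) \<and> frac (0 - (a + \<beta> + real j * \<beta>)) + b < 1"
    if "j < q - 1" for j
  proof -
    have ret: "2 * \<epsilon> < frac (real (Suc j) * \<beta>)" "frac (real (Suc j) * \<beta>) < 1 - l"
      using return[of "Suc j"] that by auto
    then have "frac (- (a + real (Suc j) * \<beta>)) = 1 - a - frac (real (Suc j) * \<beta>)"
      using ab assms by (intro frac_minus_add) (auto simp: a_def)
    then show ?thesis using ret by (simp add: algebra_simps a_def b_def)
  qed
  obtain w' Q' where w': "set w' \<subseteq> {1, 2}"
    and walked: "word_comp \<alpha> \<beta> w' ` circle \<subseteq> (\<lambda>\<tau>. frac (Q' + \<tau>)) `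
      ((\<lambda>s. s + real (q - 1) * \<beta>) ` {a + \<beta>..a + \<beta> + (l - a)} \<union> {0..0 + b})"
    by (rule word_image_shift_arc[OF assms(1-3) w split, where k = "q - 1"])
      (use assms ab walk in auto)
  have "a + \<beta> + real (q - 1) * \<beta> = a - \<gamma> + of_int (\<lfloor>real q * \<beta>\<rfloor> + 1)"
    using assms(8,9) by (simp add: of_nat_diff algebra_simps frac_def)
  then have "(\<lambda>s. s + real (q - 1) * \<beta>) ` {a + \<beta>..a + \<beta> + (l - a)} =
      (\<lambda>s. s + of_int (\<lfloor>real q * \<beta>\<rfloor> + 1)) ` {a - \<gamma>..l - \<gamma>}"
    by (simp add: algebra_simps)
  with walked have "word_comp \<alpha> \<beta> w' ` circle \<subseteq> (\<lambda>\<tau>. frac (Q' + \<tau>)) ` ({a - \<gamma>..l - \<gamma>} \<union> {0..0 + b})"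
    by (simp only: frac_image_translate_Int)
  moreover have "{a - \<gamma>..l - \<gamma>} \<union> {0..0 + b} \<subseteq> {- \<epsilon>..max (\<gamma> + \<epsilon>) (l - \<gamma>)}"
    using assms(10) by (auto simp: a_def b_def)
  ultimately have "contracts_to_arc \<alpha> \<beta> (max (\<gamma> + \<epsilon>) (l - \<gamma>) - - \<epsilon>)"
    by (rule contracts_to_arcI[OF w'])
  then show ?thesis by simp
qed

lemma first_return_from_above:
  fixes \<beta> m :: real
  assumes "\<beta> \<notin> \<rat>" "0 < m" "m \<le> 1"
  obtains q where "1 \<le> q" "frac (real q * \<beta>) \<le> m"
    "\<And>j. 1 \<le> j \<Longrightarrow> j < q \<Longrightarrow> m < frac (real j * \<beta>)"
proof -
  obtain n where "0 < frac (0 + real n * \<beta>)" "frac (0 + real n * \<beta>) < m"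
    by (rule frac_irrational_rotation_dense[OF assms(1), of 0 m 0]) (use assms in auto)
  moreover have "n \<noteq> 0" using calculation by (intro notI) simp
  ultimately have ex: "\<exists>j. 1 \<le> j \<and> frac (real j * \<beta>) \<le> m"
    by (intro exI[of _ n]) simp
  define q where "q = (LEAST j. 1 \<le> j \<and> frac (real j * \<beta>) \<le> m)"
  have q: "1 \<le> q" "frac (real q * \<beta>) \<le> m"
    using LeastI_ex[OF ex] unfolding q_def by auto
  show thesis
  proof (rule that[OF q])
    fix j assume "1 \<le> j" "j < q"
    then show "m < frac (real j * \<beta>)"
      using not_less_Least[of j "\<lambda>j. 1 \<le> j \<and> frac (real j * \<beta>) \<le> m"] unfolding q_def by auto
  qed
qed

lemma first_return_from_below:
  fixes \<beta> m :: real
  assumes "\<beta> \<notin> \<rat>" "0 < m" "m \<le> 1"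
  obtains q where "1 \<le> q" "1 - m \<le> frac (real q * \<beta>)"
    "\<And>j. 1 \<le> j \<Longrightarrow> j < q \<Longrightarrow> frac (real j * \<beta>) < 1 - m"
proof -
  obtain n where "1 - m < frac (0 + real n * \<beta>)" "frac (0 + real n * \<beta>) < 1"
    by (rule frac_irrational_rotation_dense[OF assms(1), of "1 - m" 1 0]) (use assms in auto)
  moreover have "n \<noteq> 0" using calculation assms by (intro notI) simp
  ultimately have ex: "\<exists>j. 1 \<le> j \<and> 1 - m \<le> frac (real j * \<beta>)"
    by (intro exI[of _ n]) simp
  define q where "q = (LEAST j. 1 \<le> j \<and> 1 - m \<le> frac (real j * \<beta>))"
  have q: "1 \<le> q" "1 - m \<le> frac (real q * \<beta>)"
    using LeastI_ex[OF ex] unfolding q_def by auto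
  show thesis
  proof (rule that[OF q])
    fix j assume "1 \<le> j" "j < q"
    then show "frac (real j * \<beta>) < 1 - m"
      using not_less_Least[of j "\<lambda>j. 1 \<le> j \<and> 1 - m \<le> frac (real j * \<beta>)"] unfolding q_def by auto
  qed
qed

lemma contracts_to_arc_below_from_above:
  fixes \<alpha> \<beta> :: real
  assumes "\<alpha> \<notin> \<rat>" "0 < \<alpha>" "\<alpha> < 1" "\<beta> \<notin> \<rat>" "0 < \<beta>"
    and "2 * m < min \<alpha> (1 - \<alpha>)"
    and near: "\<And>d. 0 < d \<Longrightarrow> \<exists>l. contracts_to_arc \<alpha> \<beta> l \<and> m \<le> l \<and> l < m + d"
    and q: "1 \<le> q" "frac (real q * \<beta>) < m" "\<And>j. 1 \<le> j \<Longrightarrow> j < q \<Longrightarrow> m < frac (real j * \<beta>)"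
  shows "\<exists>l<m. contracts_to_arc \<alpha> \<beta> l"
proof -
  define \<gamma> where "\<gamma> = frac (real q * \<beta>)"
  have "0 < \<gamma>"
    using of_nat_mult_irrational_notin_Ints[OF assms(4)] q(1) by (simp add: \<gamma>_def)
  obtain \<kappa> where "0 < \<kappa>" and \<kappa>: "\<forall>x\<in>(\<lambda>j. frac (real j * \<beta>)) ` {1..<q}. m + \<kappa> < x \<and> x < 1 - \<kappa>"
    by (rule finite_set_margin[of "(\<lambda>j. frac (real j * \<beta>)) ` {1..<q}" m 1]) (use q frac_lt_1 in auto)
  define \<epsilon> where "\<epsilon> = min \<kappa> (min \<gamma> (m - \<gamma>)) / 3"
  define \<delta> where "\<delta> = min (min \<kappa> \<gamma>) (min \<alpha> (1 - \<alpha>)) / 4"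
  have \<epsilon>: "0 < \<epsilon>" "3 * \<epsilon> \<le> \<kappa>" "3 * \<epsilon> \<le> \<gamma>" "3 * \<epsilon> \<le> m - \<gamma>"
    using \<open>0 < \<kappa>\<close> \<open>0 < \<gamma>\<close> q(2) by (auto simp: \<epsilon>_def \<gamma>_def)
  have \<delta>: "0 < \<delta>" "4 * \<delta> \<le> \<kappa>" "4 * \<delta> \<le> \<gamma>" "4 * \<delta> \<le> min \<alpha> (1 - \<alpha>)"
    using \<open>0 < \<kappa>\<close> \<open>0 < \<gamma>\<close> assms(2,3) by (auto simp: \<delta>_def)
  obtain l where l: "contracts_to_arc \<alpha> \<beta> l" "m \<le> l" "l < m + \<delta>"
    using near[OF \<delta>(1)] by blast
  have "contracts_to_arc \<alpha> \<beta> (l + \<epsilon> - min \<gamma> (l - \<gamma> - \<epsilon>))"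
  proof (rule contracts_to_arc_fold_from_above[OF assms(1-3,5) l(1) _ _ q(1) \<gamma>_def[symmetric]])
    show "l < \<alpha>" "l < 1 - \<alpha>" using l(3) \<delta>(4) assms(2,3,6) by auto
    show "0 < \<epsilon>" "\<epsilon> \<le> \<gamma>" "\<gamma> + \<epsilon> \<le> l" using \<epsilon> l(2) by auto
    show "l < frac (real j * \<beta>) \<and> frac (real j * \<beta>) < 1 - 2 * \<epsilon>" if "1 \<le> j" "j < q" for j
    proof -
      have "m + \<kappa> < frac (real j * \<beta>) \<and> frac (real j * \<beta>) < 1 - \<kappa>" using \<kappa> that by auto
      then show ?thesis using l(3) \<delta>(2) \<epsilon>(1,2) \<open>0 < \<kappa>\<close> by linarith
    qed
  qed
  moreover have "l + \<epsilon> - min \<gamma> (l - \<gamma> - \<epsilon>) < m"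
    using l(3) \<epsilon> \<delta> q(2) by (auto simp: min_def \<gamma>_def)
  ultimately show ?thesis by blast
qed

lemma contracts_to_arc_below_from_below:
  fixes \<alpha> \<beta> :: real
  assumes "\<alpha> \<notin> \<rat>" "0 < \<alpha>" "\<alpha> < 1" "\<beta> \<notin> \<rat>" "0 < \<beta>"
    and "2 * m < min \<alpha> (1 - \<alpha>)"
    and near: "\<And>d. 0 < d \<Longrightarrow> \<exists>l. contracts_to_arc \<alpha> \<beta> l \<and> m \<le> l \<and> l < m + d"
    and q: "1 \<le> q" "1 - m < frac (real q * \<beta>)" "\<And>j. 1 \<le> j \<Longrightarrow> j < q \<Longrightarrow> frac (real j * \<beta>) < 1 - m"
  shows "\<exists>l<m. contracts_to_arc \<alpha> \<beta> l"
proof -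
  define \<gamma> where "\<gamma> = 1 - frac (real q * \<beta>)"
  have "0 < \<gamma>" using frac_lt_1 by (simp add: \<gamma>_def)
  have frac_pos: "0 < frac (real j * \<beta>)" if "1 \<le> j" for j
    using of_nat_mult_irrational_notin_Ints[OF assms(4)] that by simp
  obtain \<kappa> where "0 < \<kappa>" and \<kappa>: "\<forall>x\<in>(\<lambda>j. frac (real j * \<beta>)) ` {1..<q}. 0 + \<kappa> < x \<and> x < 1 - m - \<kappa>"
    by (rule finite_set_margin[of "(\<lambda>j. frac (real j * \<beta>)) ` {1..<q}" 0 "1 - m"]) (use q frac_pos in auto)
  define \<epsilon> where "\<epsilon> = min \<kappa> (min \<gamma> (m - \<gamma>)) / 3"
  define \<delta> where "\<delta> = min (min \<kappa> \<gamma>) (min \<alpha> (1 - \<alpha>)) / 4"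
  have \<epsilon>: "0 < \<epsilon>" "3 * \<epsilon> \<le> \<kappa>" "3 * \<epsilon> \<le> \<gamma>" "3 * \<epsilon> \<le> m - \<gamma>"
    using \<open>0 < \<kappa>\<close> \<open>0 < \<gamma>\<close> q(2) by (auto simp: \<epsilon>_def \<gamma>_def)
  have \<delta>: "0 < \<delta>" "4 * \<delta> \<le> \<kappa>" "4 * \<delta> \<le> \<gamma>" "4 * \<delta> \<le> min \<alpha> (1 - \<alpha>)"
    using \<open>0 < \<kappa>\<close> \<open>0 < \<gamma>\<close> assms(2,3) by (auto simp: \<delta>_def)
  obtain l where l: "contracts_to_arc \<alpha> \<beta> l" "m \<le> l" "l < m + \<delta>"
    using near[OF \<delta>(1)] by blast
  have "contracts_to_arc \<alpha> \<beta> (max (\<gamma> + \<epsilon>) (l - \<gamma>) + \<epsilon>)"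
  proof (rule contracts_to_arc_fold_from_below[OF assms(1-3,5) l(1) _ _ q(1)])
    show "frac (real q * \<beta>) = 1 - \<gamma>" by (simp add: \<gamma>_def)
    show "l < \<alpha>" "l < 1 - \<alpha>" using l(3) \<delta>(4) assms(2,3,6) by auto
    show "0 < \<epsilon>" "\<epsilon> \<le> \<gamma>" "\<gamma> + \<epsilon> \<le> l" using \<epsilon> l(2) by auto
    show "2 * \<epsilon> < frac (real j * \<beta>) \<and> frac (real j * \<beta>) < 1 - l" if "1 \<le> j" "j < q" for j
    proof -
      have "\<kappa> < frac (real j * \<beta>) \<and> frac (real j * \<beta>) < 1 - m - \<kappa>" using \<kappa> that by auto
      then show ?thesis using l(3) \<delta>(2) \<epsilon>(1,2) \<open>0 < \<kappa>\<close> by linarith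
    qed
  qed
  moreover have "max (\<gamma> + \<epsilon>) (l - \<gamma>) + \<epsilon> < m"
    using l(3) \<epsilon> \<delta> by (auto simp: max_def)
  ultimately show ?thesis by blast
qed

lemma contracts_to_arc_arbitrarily_short:
  fixes \<alpha> \<beta> :: real
  assumes "\<alpha> \<notin> \<rat>" "0 < \<alpha>" "\<alpha> < 1" "\<beta> \<notin> \<rat>" "0 < \<beta>" "\<beta> < min \<alpha> (1 - \<alpha>) / 8"
    and "0 < e"
  shows "\<exists>l<e. contracts_to_arc \<alpha> \<beta> l"
proof (rule ccontr)
  assume "\<not> ?thesis"
  then have bound: "\<And>l. contracts_to_arc \<alpha> \<beta> l \<Longrightarrow> e \<le> l" by (auto simp: not_less)
  define m where "m = Inf {l. contracts_to_arc \<alpha> \<beta> l}"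
  have init: "contracts_to_arc \<alpha> \<beta> (1 - \<beta>)"
    by (rule contracts_to_arc_one_minus_beta) (use assms in auto)
  have lower: "m \<le> l" if "contracts_to_arc \<alpha> \<beta> l" for l
    unfolding m_def by (rule cInf_lower) (use that bound in \<open>auto intro!: bdd_belowI[of _ e]\<close>)
  have "e \<le> m"
    unfolding m_def by (rule cInf_greatest) (use init bound in auto)
  have near: "\<exists>l. contracts_to_arc \<alpha> \<beta> l \<and> m \<le> l \<and> l < m + d" if "0 < d" for d
  proof (rule ccontr)
    assume "\<not> ?thesis"
    then have "m + d \<le> m"
      unfolding m_def by (intro cInf_greatest) (use init lower in \<open>auto simp: m_def not_less\<close>)
    then show False using that by simp
  qed
  have not_below: "\<not> (\<exists>l<m. contracts_to_arc \<alpha> \<beta> l)"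
    using lower by (auto simp: not_less)
  have "m \<le> 1 - \<beta>" using lower[OF init] .
  show False
  proof (cases "2 * \<beta> < m")
    case True
    obtain l where l: "contracts_to_arc \<alpha> \<beta> l" "m \<le> l" "l < m + min \<beta> (1 - m)"
      using near[of "min \<beta> (1 - m)"] \<open>m \<le> 1 - \<beta>\<close> assms(5) by auto
    have "contracts_to_arc \<alpha> \<beta> (l - \<beta>)"
      by (rule contracts_to_arc_shorten[OF assms(1-3,5) _ _ l(1)]) (use assms True l in auto)
    then show False using not_below l(3) by auto
  next
    case False
    then have small: "2 * m < min \<alpha> (1 - \<alpha>)" using assms(5,6) by (simp add: min_def split: if_splits)
    have m: "0 < m" "m \<le> 1" using \<open>e \<le> m\<close> \<open>m \<le> 1 - \<beta>\<close> assms(5,7) by auto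
    obtain qa where qa: "1 \<le> qa" "frac (real qa * \<beta>) \<le> m"
      "\<And>j. 1 \<le> j \<Longrightarrow> j < qa \<Longrightarrow> m < frac (real j * \<beta>)"
      using first_return_from_above[OF assms(4) m] by blast
    obtain qb where qb: "1 \<le> qb" "1 - m \<le> frac (real qb * \<beta>)"
      "\<And>j. 1 \<le> j \<Longrightarrow> j < qb \<Longrightarrow> frac (real j * \<beta>) < 1 - m"
      using first_return_from_below[OF assms(4) m] by blast
    \<comment> \<open>both returns cannot land exactly at distance m from 0, by irrationality of \<beta>\<close>
    have "frac (real qa * \<beta>) < m \<or> 1 - m < frac (real qb * \<beta>)"
      using frac_mult_irrational_add_neq_1[OF assms(4), of qa qb] qa(1,2) qb(1,2) by linarith
    then show False
      using contracts_to_arc_below_from_above[OF assms(1-5) small near qa(1) _ qa(3)]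
        contracts_to_arc_below_from_below[OF assms(1-5) small near qb(1) _ qb(3)] not_below
      by blast
  qed
qed

lemma contracts_to_arc_into_open_arc:
  fixes \<alpha> \<beta> :: real
  assumes "\<alpha> \<notin> \<rat>" "contracts_to_arc \<alpha> \<beta> l" "l < L"
  obtains js where "set js \<subseteq> {1, 2}" "word_comp \<alpha> \<beta> js ` circle \<subseteq> open_arc a L"
proof -
  obtain w p where w: "set w \<subseteq> {1, 2}"
    and arc: "word_comp \<alpha> \<beta> w ` circle \<subseteq> (\<lambda>t. frac (p + t)) ` {0..l}"
    using assms(2) unfolding contracts_to_arc_def by blast
  have "0 \<le> l" using arc by (force simp: circle_def)
  \<comment> \<open>rotate by a power of T1 so that the arc starts just after a\<close>
  obtain n where n: "0 < frac (p - a + real n * \<alpha>)" "frac (p - a + real n * \<alpha>) < min (L - l) 1"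
    by (rule frac_irrational_rotation_dense[OF assms(1), of 0 "min (L - l) 1" "p - a"])
      (use assms(3) in auto)
  define h where "h = frac (p - a + real n * \<alpha>)"
  have "word_comp \<alpha> \<beta> (replicate n 1 @ w) ` circle \<subseteq> open_arc a L"
  proof
    fix x assume "x \<in> word_comp \<alpha> \<beta> (replicate n 1 @ w) ` circle"
    then obtain t where t: "t \<in> {0..l}" and "x = word_comp \<alpha> \<beta> (replicate n 1) (frac (p + t))"
      using arc by (force simp: word_comp_append)
    then have "x = frac (p + t + real n * \<alpha>)" by (simp only: word_comp_T1_power)
    also have "\<dots> = frac (a + (h + t))"
    proof (rule frac_eq_if_diff_Ints)
      have "p + t + real n * \<alpha> - (a + (h + t)) = (p - a + real n * \<alpha>) - h" by simp
      then show "p + t + real n * \<alpha> - (a + (h + t)) \<in> \<int>"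
        unfolding h_def using diff_frac_Ints by metis
    qed
    finally have "x = frac (a + (h + t))" .
    moreover have "0 < h + t" "h + t < L"
      using n t unfolding h_def by (auto simp del: frac_gt_0_iff)
    ultimately show "x \<in> open_arc a L" unfolding open_arc_def by blast
  qed
  with w show thesis by (intro that[of "replicate n 1 @ w"]) auto
qed

theorem lemma4p1:
  fixes \<alpha> :: real
  assumes "0 < \<alpha>" and "\<alpha> < 1" and "\<alpha> \<notin> \<rat>"
  shows "\<exists>\<beta>0 > 0. \<forall>\<beta>. 0 < \<beta> \<and> \<beta> < \<beta>0 \<and> \<beta> \<notin> \<rat> \<longrightarrow>
           (\<forall>a L. 0 < L \<and> L \<le> 1 \<longrightarrow>
              (\<exists>js. set js \<subseteq> {1, 2} \<and>
                    word_comp \<alpha> \<beta> js ` circle \<subseteq> open_arc a L))"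
proof (intro exI[of _ "min \<alpha> (1 - \<alpha>) / 8"] conjI allI impI)
  show "0 < min \<alpha> (1 - \<alpha>) / 8" using assms by simp
next
  fix \<beta> a L :: real
  assume \<beta>: "0 < \<beta> \<and> \<beta> < min \<alpha> (1 - \<alpha>) / 8 \<and> \<beta> \<notin> \<rat>" and L: "0 < L \<and> L \<le> 1"
  then obtain l where "l < L" "contracts_to_arc \<alpha> \<beta> l"
    using contracts_to_arc_arbitrarily_short[OF assms(3,1,2), of \<beta> L] by blast
  then show "\<exists>js. set js \<subseteq> {1, 2} \<and> word_comp \<alpha> \<beta> js ` circle \<subseteq> open_arc a L"
    using contracts_to_arc_into_open_arc[OF assms(3)] by metis
qed

end
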